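(* For every directed forest $\mathcal{T}=(V,\mathsf{p})$ there exists a greatest element (with respect to the relation "thinner than") in the set of all leafless directed forests with vertex set $V$ that are thinner than $\mathcal{T}$.
   Context: A directed forest is a pair $\mathcal{T}=(V,\mathsf{p})$ where $V$ is a nonempty set and $\mathsf{p}\colon V\to V$ satisfies: if $n\in\mathbb{N}$, $v\in V$ and $\mathsf{p}^n(v)=v$, then $\mathsf{p}(v)=v$. A leaf is an element of $V\setminus\mathsf{p}(V)$; the forest is leafless if $\mathsf{p}(V)=V$. For directed forests $\mathcal{T}_1=(V,\mathsf{p}_1)$, $\mathcal{T}_2=(V,\mathsf{p}_2)$, $\mathcal{T}_1$ is thinner than $\mathcal{T}_2$ if $\mathsf{p}_1(v)\in\{v,\mathsf{p}_2(v)\}$ for every $v\in V$; this is a partial order. *)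

theory Defs
  imports Main
begin

definition directed_forest :: "'a set \<Rightarrow> ('a \<Rightarrow> 'a) \<Rightarrow> bool" where
  "directed_forest V p \<longleftrightarrow> V \<noteq> {} \<and> p ` V \<subseteq> V \<and>
     (\<forall>n::nat. \<forall>v\<in>V. n \<ge> 1 \<longrightarrow> (p ^^ n) v = v \<longrightarrow> p v = v)"

definition leaves :: "'a set \<Rightarrow> ('a \<Rightarrow> 'a) \<Rightarrow> 'a set" where
  "leaves V p = V - p ` V"

definition leafless :: "'a set \<Rightarrow> ('a \<Rightarrow> 'a) \<Rightarrow> bool" where
  "leafless V p \<longleftrightarrow> p ` V = V"

definition thinner :: "'a set \<Rightarrow> ('a \<Rightarrow> 'a) \<Rightarrow> ('a \<Rightarrow> 'a) \<Rightarrow> bool" where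
  "thinner V p1 p2 \<longleftrightarrow> (\<forall>v\<in>V. p1 v \<in> {v, p2 v})"

end

theory Submission
  imports Defs
begin

text \<open>A map thinner than p moves each vertex along p or not at all, so its iterates stay
  on p-orbits and thinning creates no cycles. The greatest leafless thinning lets
  exactly those vertices move along p that are moved by some leafless thinning r; it
  is again leafless because a vertex v moved by r has an r-preimage w \<noteq> v, which is
  then moved by r as well and hence mapped to v.\<close>

lemma thinner_image_subset:
  assumes "thinner V r p" "p ` V \<subseteq> V"
  shows "r ` V \<subseteq> V"
  using assms unfolding thinner_def by fastforce

lemma thinner_funpow_orbit:
  assumes "thinner V r p" "p ` V \<subseteq> V" "v \<in> V"
  shows "\<exists>k. (r ^^ n) v = (p ^^ k) v"
  using assms(3)
proof (induction n arbitrary: v)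
  case 0
  show ?case by (metis funpow_0)
next
  case (Suc n)
  have "r v \<in> V"
    using thinner_image_subset[OF assms(1,2)] Suc.prems by blast
  then obtain k where k: "(r ^^ n) (r v) = (p ^^ k) (r v)"
    using Suc.IH by blast
  have "r v = v \<or> r v = p v"
    using assms(1) Suc.prems unfolding thinner_def by blast
  then show ?case
  proof
    assume "r v = v"
    then show ?thesis using k by (metis comp_apply funpow_Suc_right)
  next
    assume "r v = p v"
    then have "(r ^^ Suc n) v = (p ^^ Suc k) v"
      using k by (simp add: funpow_Suc_right del: funpow.simps)
    then show ?thesis by blast
  qed
qed

lemma directed_forest_thinner:
  assumes forest: "directed_forest V p" and thin: "thinner V r p"
  shows "directed_forest V r"
proof -
  have pV: "p ` V \<subseteq> V"
    using forest unfolding directed_forest_def by blast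
  have "r v = v" if v: "v \<in> V" and "n \<ge> 1" and cycle: "(r ^^ n) v = v" for n v
  proof (rule ccontr)
    assume moved: "r v \<noteq> v"
    then have rv: "r v = p v"
      using thin v unfolding thinner_def by blast
    obtain m where m: "n = Suc m"
      using \<open>n \<ge> 1\<close> by (cases n) auto
    have "r v \<in> V"
      using thinner_image_subset[OF thin pV] v by blast
    then obtain k where "(r ^^ m) (r v) = (p ^^ k) (r v)"
      using thinner_funpow_orbit[OF thin pV] by blast
    then have "(p ^^ Suc k) v = v"
      using cycle rv m by (simp add: funpow_Suc_right del: funpow.simps)
    then have "p v = v"
      using forest v unfolding directed_forest_def by (metis le_add1 plus_1_eq_Suc)
    with moved rv show False by simp
  qed
  then show ?thesis
    using forest thinner_image_subset[OF thin pV] unfolding directed_forest_def by blast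
qed

definition thinner_Sup :: "'a set \<Rightarrow> ('a \<Rightarrow> 'a) \<Rightarrow> ('a \<Rightarrow> 'a) set \<Rightarrow> 'a \<Rightarrow> 'a" where
  "thinner_Sup V p R = (\<lambda>v. if v \<in> V \<and> (\<exists>r\<in>R. r v \<noteq> v) then p v else v)"

lemma thinner_Sup_thinner: "thinner V (thinner_Sup V p R) p"
  unfolding thinner_def thinner_Sup_def by auto

lemma thinner_thinner_Sup:
  assumes "r \<in> R" "thinner V r p"
  shows "thinner V r (thinner_Sup V p R)"
  using assms unfolding thinner_def thinner_Sup_def by auto

lemma leafless_thinner_Sup:
  assumes R: "\<And>r. r \<in> R \<Longrightarrow> leafless V r \<and> thinner V r p"
  shows "leafless V (thinner_Sup V p R)"
proof -
  let ?q = "thinner_Sup V p R"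
  have "v \<in> V \<and> v \<in> ?q ` V" if v: "v \<in> V" for v
  proof (cases "\<exists>r\<in>R. r v \<noteq> v")
    case False
    then show ?thesis
      using v unfolding thinner_Sup_def by force
  next
    case True
    then obtain r where r: "r \<in> R" "r v \<noteq> v" by blast
    then obtain w where w: "w \<in> V" "r w = v"
      using R v unfolding leafless_def by (metis imageE)
    with r have "r w \<noteq> w" by auto
    then have "?q w = r w"
      using R r w unfolding thinner_def thinner_Sup_def by force
    then show ?thesis using v w by (metis image_eqI)
  qed
  moreover have "?q v \<in> V" if v: "v \<in> V" for v
  proof (cases "\<exists>r\<in>R. r v \<noteq> v")
    case True
    then obtain r where r: "r \<in> R" "r v \<noteq> v" by blast
    then have "?q v = r v"
      using R v unfolding thinner_def thinner_Sup_def by force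
    then show ?thesis
      using R r v unfolding leafless_def by blast
  qed (use v in \<open>simp add: thinner_Sup_def\<close>)
  ultimately show ?thesis
    unfolding leafless_def by blast
qed

theorem theorem4p3:
  fixes V :: "'a set" and p :: "'a \<Rightarrow> 'a"
  assumes "directed_forest V p"
  shows "\<exists>q. (directed_forest V q \<and> leafless V q \<and> thinner V q p) \<and>
           (\<forall>r. directed_forest V r \<and> leafless V r \<and> thinner V r p \<longrightarrow> thinner V r q)"
proof -
  define R where "R = {r. leafless V r \<and> thinner V r p}"
  let ?q = "thinner_Sup V p R"
  have "directed_forest V ?q"
    using directed_forest_thinner[OF assms thinner_Sup_thinner] .
  moreover have "leafless V ?q"
    by (rule leafless_thinner_Sup) (simp add: R_def)
  moreover have "thinner V r ?q" if "leafless V r" "thinner V r p" for r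
    using that by (intro thinner_thinner_Sup) (simp_all add: R_def)
  ultimately show ?thesis
    using thinner_Sup_thinner by blast
qed

end
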